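(* Let $(Q,\mathcal{K})$ be a learning space with $|Q|\ge 2$ and let $Q'$ be a proper non-empty subset of $Q$. The following are equivalent: (i) $Q'$ is yielding; (ii) every plus child of $\mathcal{K}$ (induced by $Q'$) is a learning space.
   Context: All sets are finite. A knowledge structure is a family $\mathcal{K}$ of subsets of $Q=\bigcup\mathcal{K}\neq\varnothing$ with $\varnothing\in\mathcal{K}$. A learning space is a knowledge structure satisfying: [L1] for $K\subset L$ in $\mathcal{K}$ with $|L\setminus K|=n$ there is a chain $K=K_0\subset\dots\subset K_n=L$ with $K_{i+1}=K_i\cup\{q_i\}\in\mathcal{K}$, $q_i\notin K_i$; [L2] if $K\subset L$ in $\mathcal{K}$ and $K\cup\{q\}\in\mathcal{K}$ with $q\notin K$ then $L\cup\{q\}\in\mathcal{K}$. For $Q'\subset Q$: $K\sim L$ iff $K\cap Q'=L\cap Q'$, with $[K]$ the equivalence class of $K$ in $\mathcal{K}$. The $Q'$-child determined by $K$ is $\mathcal{K}_{[K]}=\{L\setminus\bigcap[K]: L\in\mathcal{K}, L\sim K\}$; it is trivial if it equals $\{\varnothing\}$. For a non-trivial child, the plus child is $\mathcal{K}_{[K]}^+=\mathcal{K}_{[K]}\cup\{\varnothing\}$ (a learning space on its own union). $Q'$ is yielding if for every $K\in\mathcal{K}$ and every state $L$ minimal for inclusion in $[K]$, $|L\setminus\bigcap[K]|\le 1$. *)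

theory Defs
  imports Main
begin

text \<open>A knowledge structure: a family of (finite) subsets of the finite nonempty domain
  Q = \<Union>K, containing the empty set.\<close>
definition knowledge_structure :: "'a set set \<Rightarrow> bool" where
  "knowledge_structure \<K> \<longleftrightarrow> finite (\<Union>\<K>) \<and> \<Union>\<K> \<noteq> {} \<and> {} \<in> \<K>"

definition learning_smooth :: "'a set set \<Rightarrow> bool" where
  "learning_smooth \<K> \<longleftrightarrow>
     (\<forall>K\<in>\<K>. \<forall>L\<in>\<K>. K \<subseteq> L \<longrightarrow>
        (\<exists>f :: nat \<Rightarrow> 'a set. f 0 = K \<and> f (card (L - K)) = L \<and>
           (\<forall>i < card (L - K). f (Suc i) \<in> \<K> \<and>
              (\<exists>q. q \<notin> f i \<and> f (Suc i) = insert q (f i)))))"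

definition learning_consistent :: "'a set set \<Rightarrow> bool" where
  "learning_consistent \<K> \<longleftrightarrow>
     (\<forall>K\<in>\<K>. \<forall>L\<in>\<K>. \<forall>q. K \<subseteq> L \<and> q \<notin> K \<and> insert q K \<in> \<K> \<longrightarrow> insert q L \<in> \<K>)"

definition learning_space :: "'a set set \<Rightarrow> bool" where
  "learning_space \<K> \<longleftrightarrow> knowledge_structure \<K> \<and> learning_smooth \<K> \<and> learning_consistent \<K>"

definition eq_class :: "'a set set \<Rightarrow> 'a set \<Rightarrow> 'a set \<Rightarrow> 'a set set" where
  "eq_class \<K> Q' K = {L \<in> \<K>. L \<inter> Q' = K \<inter> Q'}"

definition child :: "'a set set \<Rightarrow> 'a set \<Rightarrow> 'a set \<Rightarrow> 'a set set" where
  "child \<K> Q' K = (\<lambda>L. L - \<Inter>(eq_class \<K> Q' K)) ` eq_class \<K> Q' K"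

definition trivial_child :: "'a set set \<Rightarrow> 'a set \<Rightarrow> 'a set \<Rightarrow> bool" where
  "trivial_child \<K> Q' K \<longleftrightarrow> child \<K> Q' K = {{}}"

definition plus_child :: "'a set set \<Rightarrow> 'a set \<Rightarrow> 'a set \<Rightarrow> 'a set set" where
  "plus_child \<K> Q' K = insert {} (child \<K> Q' K)"

definition yielding :: "'a set set \<Rightarrow> 'a set \<Rightarrow> bool" where
  "yielding \<K> Q' \<longleftrightarrow>
     (\<forall>K\<in>\<K>. \<forall>L\<in>eq_class \<K> Q' K.
        (\<not> (\<exists>M\<in>eq_class \<K> Q' K. M \<subset> L)) \<longrightarrow> card (L - \<Inter>(eq_class \<K> Q' K)) \<le> 1)"

end

theory Submission
  imports Defs
begin

text \<open>
  Inside one equivalence class \<open>[K]\<close> the union of two states stays in \<open>[K]\<close>, and a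
  one-item step from \<open>M \<subset> N\<close> inside \<open>\<K>\<close> stays in \<open>[K]\<close> as well, because the added
  item lies in \<open>N\<close> but not in \<open>M\<close>, hence outside \<open>Q'\<close>. Removing \<open>\<Inter>[K]\<close> preserves
  both properties, so every plus child is closed under union (which gives [L2]) and
  satisfies [L1] between any two of its non-empty states. What remains is a first step
  out of the added empty state: it exists towards every state exactly when every
  minimal state \<open>L\<close> of \<open>[K]\<close> has \<open>|L - \<Inter>[K]| \<le> 1\<close>, which is the yielding condition.
\<close>

lemma learning_smooth_step:
  assumes "learning_smooth F" "A \<in> F" "B \<in> F" "A \<subset> B" "finite B"
  obtains q where "q \<in> B - A" "insert q A \<in> F"
proof -
  let ?n = "card (B - A)"
  have "0 < ?n" using assms(4,5) by (simp add: card_gt_0_iff)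
  obtain f where f0: "f 0 = A" and fn: "f ?n = B"
    and chain: "\<And>i. i < ?n \<Longrightarrow> f (Suc i) \<in> F \<and> (\<exists>q. q \<notin> f i \<and> f (Suc i) = insert q (f i))"
    using assms(1)[unfolded learning_smooth_def, rule_format, OF assms(2,3)] assms(4) by blast
  obtain q where q: "q \<notin> A" "f 1 = insert q A" "insert q A \<in> F"
    using chain[OF \<open>0 < ?n\<close>] f0 by auto
  have "f 1 \<subseteq> f j" if "1 \<le> j" "j \<le> ?n" for j
    using that
  proof (induction rule: dec_induct)
    case base then show ?case by simp
  next
    case (step m)
    then show ?case using chain[of m] by auto
  qed
  then have "f 1 \<subseteq> f ?n" using \<open>0 < ?n\<close> by simp
  with q fn show thesis using that by blast
qed

lemma learning_smooth_if_step:
  assumes finite: "\<And>A. A \<in> F \<Longrightarrow> finite A"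
    and step: "\<And>A B. A \<in> F \<Longrightarrow> B \<in> F \<Longrightarrow> A \<subset> B \<Longrightarrow> \<exists>q \<in> B - A. insert q A \<in> F"
  shows "learning_smooth F"
  unfolding learning_smooth_def
proof (intro ballI impI)
  fix A B assume "A \<in> F" "B \<in> F" "A \<subseteq> B"
  have "\<exists>f. f 0 = A \<and> f n = B \<and> (\<forall>i<n. f (Suc i) \<in> F \<and> (\<exists>q. q \<notin> f i \<and> f (Suc i) = insert q (f i)))"
    if "card (B - A) = n" "A \<in> F" "A \<subseteq> B" for n
    using that
  proof (induction n arbitrary: A)
    case 0
    with finite[OF \<open>B \<in> F\<close>] have "A = B" by auto
    then show ?case by (intro exI[of _ "\<lambda>_. A"]) simp
  next
    case (Suc n)
    then have "A \<subset> B" by auto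
    then obtain q where q: "q \<in> B - A" "insert q A \<in> F"
      using step Suc.prems(2) \<open>B \<in> F\<close> by blast
    have "card (B - insert q A) = card ((B - A) - {q})"
      by (rule arg_cong[where f = card]) blast
    also have "\<dots> = n"
      using card_Diff_singleton[of q "B - A"] q(1) Suc.prems(1) by linarith
    finally have "card (B - insert q A) = n" .
    moreover have "insert q A \<subseteq> B" using q(1) Suc.prems(3) by blast
    ultimately obtain g where "g 0 = insert q A" "g n = B"
      and "\<forall>i<n. g (Suc i) \<in> F \<and> (\<exists>q. q \<notin> g i \<and> g (Suc i) = insert q (g i))"
      using Suc.IH[OF _ q(2)] by blast
    with q show ?case
      by (intro exI[of _ "case_nat A g"]) (auto simp: less_Suc_eq_0_disj)
  qed
  with \<open>A \<in> F\<close> \<open>A \<subseteq> B\<close> show "\<exists>f. f 0 = A \<and> f (card (B - A)) = B \<and>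
      (\<forall>i<card (B - A). f (Suc i) \<in> F \<and> (\<exists>q. q \<notin> f i \<and> f (Suc i) = insert q (f i)))"
    by blast
qed

lemma learning_consistent_if_Un_closed:
  assumes "\<And>A B. A \<in> F \<Longrightarrow> B \<in> F \<Longrightarrow> A \<union> B \<in> F"
  shows "learning_consistent F"
  unfolding learning_consistent_def
proof (intro ballI allI impI)
  fix K L q assume "L \<in> F" "K \<subseteq> L \<and> q \<notin> K \<and> insert q K \<in> F"
  then have "insert q L = L \<union> insert q K" "insert q K \<in> F" by auto
  with assms \<open>L \<in> F\<close> show "insert q L \<in> F" by metis
qed

lemma learning_space_finite_state:
  assumes "learning_space F" "K \<in> F"
  shows "finite K"
proof (rule finite_subset)
  show "K \<subseteq> \<Union>F" using assms(2) by (rule Union_upper)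
  show "finite (\<Union>F)" using assms(1) by (simp add: learning_space_def knowledge_structure_def)
qed

lemma Un_closed_if_learning_smooth_consistent:
  assumes smooth: "learning_smooth F" and consistent: "learning_consistent F" and "{} \<in> F"
    and "K \<in> F" "L \<in> F"
  shows "K \<union> L \<in> F"
proof -
  let ?n = "card (K - {})"
  obtain f where f0: "f 0 = {}" and fn: "f ?n = K"
    and chain: "\<forall>i<?n. f (Suc i) \<in> F \<and> (\<exists>q. q \<notin> f i \<and> f (Suc i) = insert q (f i))"
    using smooth[unfolded learning_smooth_def, rule_format, OF \<open>{} \<in> F\<close> \<open>K \<in> F\<close> empty_subsetI]
    by (elim exE conjE)
  have "f i \<in> F \<and> L \<union> f i \<in> F" if "i \<le> ?n" for i
    using that
  proof (induction i)
    case 0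
    with f0 \<open>{} \<in> F\<close> \<open>L \<in> F\<close> show ?case by simp
  next
    case (Suc i)
    then have "i < ?n" by simp
    with chain obtain q where q: "q \<notin> f i" "f (Suc i) = insert q (f i)" "f (Suc i) \<in> F"
      by blast
    have "f i \<in> F" "L \<union> f i \<in> F" using Suc by simp_all
    moreover have "insert q (f i) \<in> F" using q(2,3) by simp
    ultimately have "insert q (L \<union> f i) \<in> F"
      using consistent[unfolded learning_consistent_def, rule_format, of "f i" "L \<union> f i" q] q(1)
      by blast
    with q show ?case by simp
  qed
  then have "L \<union> f ?n \<in> F" by blast
  with fn show ?thesis by (simp add: Un_commute)
qed

lemma exists_minimal_below:
  assumes "finite N" "N \<in> C"
  shows "\<exists>M\<in>C. M \<subseteq> N \<and> \<not> (\<exists>M'\<in>C. M' \<subset> M)"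
proof -
  have "finite {M \<in> C. M \<subseteq> N}"
    by (rule finite_subset[OF _ finite_Pow_iff[THEN iffD2, OF assms(1)]]) blast
  from finite_has_minimal2[OF this, of N] assms(2) obtain M
    where M: "M \<in> C" "M \<subseteq> N" and least: "\<And>M'. M' \<in> C \<Longrightarrow> M' \<subseteq> N \<Longrightarrow> M' \<subseteq> M \<Longrightarrow> M = M'"
    by auto
  have "\<not> M' \<subset> M" if "M' \<in> C" for M'
  proof
    assume "M' \<subset> M"
    with M(2) have "M' \<subseteq> N" by (meson order.trans psubset_imp_subset)
    with least[OF that] \<open>M' \<subset> M\<close> show False by blast
  qed
  with M show ?thesis by blast
qed

lemma eq_class_Un:
  assumes "learning_space \<K>" "M \<in> eq_class \<K> Q' K" "N \<in> eq_class \<K> Q' K"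
  shows "M \<union> N \<in> eq_class \<K> Q' K"
proof -
  have "M \<union> N \<in> \<K>"
    using assms(1) assms(2,3)[unfolded eq_class_def]
    by (intro Un_closed_if_learning_smooth_consistent)
      (simp_all add: learning_space_def knowledge_structure_def)
  moreover have "(M \<union> N) \<inter> Q' = K \<inter> Q'"
    using assms(2,3) by (simp add: eq_class_def Int_Un_distrib2)
  ultimately show ?thesis by (simp add: eq_class_def)
qed

lemma eq_class_step:
  assumes "learning_space \<K>" "M \<in> eq_class \<K> Q' K" "N \<in> eq_class \<K> Q' K" "M \<subset> N"
  obtains q where "q \<in> N - M" "insert q M \<in> eq_class \<K> Q' K"
proof -
  have M: "M \<in> \<K>" "M \<inter> Q' = K \<inter> Q'" and N: "N \<in> \<K>" "N \<inter> Q' = K \<inter> Q'"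
    using assms(2,3) by (simp_all add: eq_class_def)
  have "learning_smooth \<K>" using assms(1) by (simp add: learning_space_def)
  then obtain q where q: "q \<in> N - M" "insert q M \<in> \<K>"
    using M(1) N(1) assms(4) learning_space_finite_state[OF assms(1) N(1)]
    by (rule learning_smooth_step)
  have "q \<notin> Q'"
  proof
    assume "q \<in> Q'"
    with q(1) have "q \<in> N \<inter> Q'" by blast
    with M(2) N(2) have "q \<in> M \<inter> Q'" by simp
    with q(1) show False by blast
  qed
  with M(2) have "insert q M \<inter> Q' = K \<inter> Q'" by simp
  with q that show thesis by (simp add: eq_class_def)
qed

lemma plus_child_Un_closed:
  assumes "learning_space \<K>" "A \<in> plus_child \<K> Q' K" "B \<in> plus_child \<K> Q' K"
  shows "A \<union> B \<in> plus_child \<K> Q' K"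
proof -
  let ?C = "eq_class \<K> Q' K"
  let ?I = "\<Inter>?C"
  consider "A = {}" | "B = {}" | M N where "M \<in> ?C" "N \<in> ?C" "A = M - ?I" "B = N - ?I"
    using assms(2,3) unfolding plus_child_def child_def by blast
  then show ?thesis
  proof cases
    case 1
    with assms(3) show ?thesis by simp
  next
    case 2
    with assms(2) show ?thesis by simp
  next
    case (3 M N)
    then have "A \<union> B = (M \<union> N) - ?I" by blast
    with eq_class_Un[OF assms(1) 3(1,2)] show ?thesis
      unfolding plus_child_def child_def by blast
  qed
qed

lemma knowledge_structure_plus_child:
  assumes "learning_space \<K>" "K \<in> \<K>" "\<not> trivial_child \<K> Q' K"
  shows "knowledge_structure (plus_child \<K> Q' K)"
proof -
  have "\<Union>(plus_child \<K> Q' K) \<subseteq> \<Union>\<K>"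
    unfolding plus_child_def child_def eq_class_def by blast
  moreover have "finite (\<Union>\<K>)"
    using assms(1) by (simp add: learning_space_def knowledge_structure_def)
  moreover have "child \<K> Q' K \<noteq> {}"
    using assms(2) unfolding child_def eq_class_def by blast
  with assms(3) obtain X where "X \<in> child \<K> Q' K" "X \<noteq> {}"
    unfolding trivial_child_def by blast
  ultimately show ?thesis
    unfolding knowledge_structure_def plus_child_def by (auto intro: finite_subset)
qed

lemma learning_smooth_plus_child_if_yielding:
  assumes "learning_space \<K>" "yielding \<K> Q'" "K \<in> \<K>"
  shows "learning_smooth (plus_child \<K> Q' K)"
proof (rule learning_smooth_if_step)
  define C where "C = eq_class \<K> Q' K"
  define I where "I = \<Inter>C"
  have plus: "plus_child \<K> Q' K = insert {} ((\<lambda>L. L - I) ` C)"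
    unfolding plus_child_def child_def C_def I_def ..
  have I_sub: "I \<subseteq> M" if "M \<in> C" for M
    using that unfolding I_def by (rule Inter_lower)
  have finite_class: "finite M" if "M \<in> C" for M
    using that learning_space_finite_state[OF assms(1)] by (simp add: C_def eq_class_def)
  have yielding_C: "card (M - I) \<le> 1" if "M \<in> C" "\<not> (\<exists>M'\<in>C. M' \<subset> M)" for M
    using assms(2,3) that unfolding yielding_def C_def I_def by blast
  show "finite A" if "A \<in> plus_child \<K> Q' K" for A
    using that finite_class unfolding plus by auto
  fix A B
  assume A: "A \<in> plus_child \<K> Q' K" and B: "B \<in> plus_child \<K> Q' K" and "A \<subset> B"
  then obtain N where N: "N \<in> C" "B = N - I" unfolding plus by blast
  show "\<exists>q \<in> B - A. insert q A \<in> plus_child \<K> Q' K"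
  proof (cases "A \<in> (\<lambda>L. L - I) ` C")
    case True
    then obtain M where M: "M \<in> C" "A = M - I" by blast
    with N \<open>A \<subset> B\<close> I_sub have "M \<subset> N" by blast
    then obtain q where q: "q \<in> N - M" "insert q M \<in> C"
      using eq_class_step[OF assms(1), of M Q' K N] M(1) N(1) unfolding C_def by blast
    with M N I_sub have "q \<in> B - A" "insert q A = insert q M - I" by blast+
    with q(2) show ?thesis unfolding plus by blast
  next
    case False
    \<comment> \<open>\<open>A\<close> is the state added by the plus construction: step to a minimal state below \<open>N\<close>.\<close>
    with A have "A = {}" unfolding plus by blast
    obtain M where M: "M \<in> C" "M \<subseteq> N" "\<not> (\<exists>M'\<in>C. M' \<subset> M)"
      using exists_minimal_below[OF finite_class[OF N(1)] N(1)] by blast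
    have "M - I \<noteq> {}" using False \<open>A = {}\<close> M(1) by (metis image_eqI)
    with finite_class[OF M(1)] have "card (M - I) \<noteq> 0" by simp
    with yielding_C[OF M(1,3)] have "card (M - I) = 1" by linarith
    then obtain q where q: "M - I = {q}" by (rule card_1_singletonE)
    with \<open>A = {}\<close> M(2) N(2) have "q \<in> B - A" by blast
    moreover have "insert q A \<in> (\<lambda>L. L - I) ` C"
      using q \<open>A = {}\<close> M(1) by (metis image_eqI)
    ultimately show ?thesis unfolding plus by blast
  qed
qed

lemma learning_space_plus_child_if_yielding:
  assumes "learning_space \<K>" "yielding \<K> Q'" "K \<in> \<K>" "\<not> trivial_child \<K> Q' K"
  shows "learning_space (plus_child \<K> Q' K)"
  unfolding learning_space_def
proof (intro conjI)
  show "knowledge_structure (plus_child \<K> Q' K)"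
    by (rule knowledge_structure_plus_child[OF assms(1,3,4)])
  show "learning_smooth (plus_child \<K> Q' K)"
    by (rule learning_smooth_plus_child_if_yielding[OF assms(1-3)])
  show "learning_consistent (plus_child \<K> Q' K)"
    by (rule learning_consistent_if_Un_closed) (rule plus_child_Un_closed[OF assms(1)])
qed

lemma yielding_if_plus_children_learning_spaces:
  assumes "learning_space \<K>"
    and plus_children: "\<And>K. K \<in> \<K> \<Longrightarrow> \<not> trivial_child \<K> Q' K \<Longrightarrow> learning_space (plus_child \<K> Q' K)"
  shows "yielding \<K> Q'"
  unfolding yielding_def
proof (intro ballI impI)
  fix K L
  define C where "C = eq_class \<K> Q' K"
  define I where "I = \<Inter>C"
  assume K: "K \<in> \<K>" and "L \<in> eq_class \<K> Q' K"
    and "\<not> (\<exists>M\<in>eq_class \<K> Q' K. M \<subset> L)"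
  then have L: "L \<in> C" and minimal: "\<not> (\<exists>M\<in>C. M \<subset> L)" by (simp_all add: C_def)
  have child: "child \<K> Q' K = (\<lambda>L. L - I) ` C"
    unfolding child_def C_def I_def ..
  then have plus: "plus_child \<K> Q' K = insert {} ((\<lambda>L. L - I) ` C)"
    unfolding plus_child_def by simp
  have "card (L - I) \<le> 1"
  proof (rule ccontr)
    assume big: "\<not> card (L - I) \<le> 1"
    then have "L - I \<noteq> {}" by (intro notI) simp
    moreover have "L - I \<in> child \<K> Q' K" unfolding child using L by (rule imageI)
    ultimately have "\<not> trivial_child \<K> Q' K" unfolding trivial_child_def by (metis singletonD)
    with K plus_children have smooth: "learning_smooth (plus_child \<K> Q' K)"
      by (simp add: learning_space_def)
    have "{} \<in> plus_child \<K> Q' K" "L - I \<in> plus_child \<K> Q' K"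
      unfolding plus using L by auto
    moreover have "{} \<subset> L - I" using \<open>L - I \<noteq> {}\<close> by blast
    moreover have "finite (L - I)"
      using L learning_space_finite_state[OF assms(1)] by (simp add: C_def eq_class_def)
    ultimately obtain q where "q \<in> L - I - {}" "insert q {} \<in> plus_child \<K> Q' K"
      by (rule learning_smooth_step[OF smooth])
    then have q: "q \<in> L - I" "{q} \<in> plus_child \<K> Q' K" by simp_all
    then have "{q} \<in> (\<lambda>L. L - I) ` C" unfolding plus by simp
    then obtain M where M: "{q} = M - I" "M \<in> C" by (rule imageE)
    have "I \<subseteq> L" using L unfolding I_def by (rule Inter_lower)
    moreover have "M - I \<subseteq> {q}" using M(1) by (rule equalityD2)
    ultimately have "M \<subseteq> L" using q(1) by blast
    moreover have "M \<noteq> L"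
    proof
      assume "M = L"
      with M(1) have "L - I = {q}" by simp
      with big show False by simp
    qed
    ultimately show False using minimal M(2) by blast
  qed
  then show "card (L - \<Inter>(eq_class \<K> Q' K)) \<le> 1" by (simp add: I_def C_def)
qed

theorem mainTheorem6:
  fixes \<K> :: "'a set set" and Q' :: "'a set"
  assumes "learning_space \<K>"
    and "card (\<Union>\<K>) \<ge> 2"
    and "Q' \<subset> \<Union>\<K>" and "Q' \<noteq> {}"
  shows "yielding \<K> Q' \<longleftrightarrow>
         (\<forall>K\<in>\<K>. \<not> trivial_child \<K> Q' K \<longrightarrow> learning_space (plus_child \<K> Q' K))"
proof
  assume "yielding \<K> Q'"
  then show "\<forall>K\<in>\<K>. \<not> trivial_child \<K> Q' K \<longrightarrow> learning_space (plus_child \<K> Q' K)"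
    using learning_space_plus_child_if_yielding[OF assms(1)] by blast
next
  assume "\<forall>K\<in>\<K>. \<not> trivial_child \<K> Q' K \<longrightarrow> learning_space (plus_child \<K> Q' K)"
  then show "yielding \<K> Q'"
    by (intro yielding_if_plus_children_learning_spaces[OF assms(1)]) blast
qed

end
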